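(* Let $J$ satisfy: $\mathbb{Z}^d$-symmetric, $\sum_xJ(x)=1$, $\hat J(0)-\hat J(k)\ge K_0|k|^2/(2d)$ on $[-\pi,\pi]^d$, $\sum_x|x|^2J(x)=K_1$, $\sum_x|x|^2|J(x)|\le K_2$ (finite positive constants), and define for $t\ge0$ $$I_t(x):=\int_{[-\pi,\pi]^d}\frac{d^dk}{(2\pi)^d}e^{ik\cdot x}e^{-t\{1-\hat J(k)\}}.$$ Fix $\varepsilon>0$. Then for all $t\ge1/\varepsilon$ and all $x\in\mathbb{Z}^d$, $$I_t(x)=\Big(\frac{d}{2\pi K_1t}\Big)^{d/2}\exp\Big(-\frac{d|x|^2}{2tK_1}\Big)+R_3(t,x),\qquad |R_3(t,x)|\le o(t^{-d/2})+c_5e^{-c_2/\varepsilon}t^{-d/2},$$ where $c_5=2(d/(\pi K_0))^{d/2}$, $c_2=K_0/(4d)$, and the $o(t^{-d/2})$ term (as $t\to\infty$) is uniform in $x$ but may depend on $\varepsilon$.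
   Context: $\hat J(k)=\sum_xJ(x)e^{-ik\cdot x}$; $\mathbb{Z}^d$-symmetric means invariant under permutations and sign changes of coordinates. *)

theory Defs
  imports "HOL-Analysis.Analysis" "HOL-Library.Landau_Symbols"
begin

text \<open>Points of the lattice Z^d are int^'n, Fourier variables are real^'n, with d = CARD('n).\<close>

definition ldot :: "real^'n \<Rightarrow> int^'n \<Rightarrow> real" where
  "ldot k x = (\<Sum>i\<in>UNIV. k$i * real_of_int (x$i))"

definition lnorm2 :: "int^'n \<Rightarrow> real" where
  "lnorm2 x = (\<Sum>i\<in>UNIV. (real_of_int (x$i))^2)"

definition Zd_symmetric :: "(int^'n \<Rightarrow> real) \<Rightarrow> bool" where
  "Zd_symmetric J \<longleftrightarrow>
     (\<forall>p x. bij (p :: 'n \<Rightarrow> 'n) \<longrightarrow> J (\<chi> i. x $ p i) = J x) \<and>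
     (\<forall>s x. (\<forall>i. s i = 1 \<or> s i = -1) \<longrightarrow> J (\<chi> i. (s i :: int) * x $ i) = J x)"

definition Jhat :: "(int^'n \<Rightarrow> real) \<Rightarrow> real^'n \<Rightarrow> complex" where
  "Jhat J k = (\<Sum>\<^sub>\<infinity>x. complex_of_real (J x) * exp (- \<i> * complex_of_real (ldot k x)))"

definition It :: "(int^'n \<Rightarrow> real) \<Rightarrow> real \<Rightarrow> int^'n \<Rightarrow> complex" where
  "It J t x = integral (cbox (\<chi> i. - pi) (\<chi> i. pi))
      (\<lambda>k. exp (\<i> * complex_of_real (ldot k x)) * exp (- complex_of_real t * (1 - Jhat J k)))
      / complex_of_real ((2 * pi) ^ CARD('n))"

end

theory Submission
  imports Defs "HOL-Probability.Characteristic_Functions" "HOL-Real_Asymp.Real_Asymp"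
begin

text \<open>
  Symmetry of \<open>J\<close> makes \<open>Jhat J\<close> real (the cosine series \<open>charfun\<close>) and forces the matrix of
  second moments to be \<open>K1/d\<close> times the identity, so that
  \<open>t (1 - charfun (k/\<surd>t)) \<rightarrow> K1 |k|\<^sup>2/(2d)\<close>. The Gaussian main term is the Fourier integral,
  over all of \<open>\<real>\<^sup>d\<close>, of \<open>exp (- t K1 |k|\<^sup>2/(2d))\<close>; hence the error is bounded, uniformly in \<open>x\<close>,
  by the \<open>L\<^sup>1\<close> distance between this Gaussian and the integrand of \<open>It\<close> cut off outside
  \<open>[-\<pi>,\<pi>]\<^sup>d\<close>. The substitution \<open>k \<mapsto> k/\<surd>t\<close> turns that distance into \<open>t powr (-d/2)\<close> times an
  integral which tends to \<open>0\<close> by dominated convergence, the infrared bound supplying the majorant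
  \<open>exp (- K0 |k|\<^sup>2/(2d))\<close>.
\<close>

section \<open>Gaussian integrals\<close>

lemma has_bochner_integral_std_normal_fourier:
  "has_bochner_integral lborel (\<lambda>x. std_normal_density x *\<^sub>R iexp (t * x))
     (complex_of_real (exp (- t\<^sup>2 / 2)))"
proof -
  interpret real_distribution std_normal_distribution by (rule real_dist_normal_dist)
  have "integrable std_normal_distribution (\<lambda>x. iexp (t * x))"
    by (rule integrable_const_bound[where B=1]) (auto simp: norm_exp_i_times)
  then have "integrable lborel (\<lambda>x. std_normal_density x *\<^sub>R iexp (t * x))"
    by (subst (asm) integrable_density) auto
  moreover have "(CLINT x|std_normal_distribution. iexp (t * x)) = complex_of_real (exp (- t\<^sup>2 / 2))"
    using char_std_normal_distribution unfolding char_def by metis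
  then have "integral\<^sup>L lborel (\<lambda>x. std_normal_density x *\<^sub>R iexp (t * x)) = complex_of_real (exp (- t\<^sup>2 / 2))"
    by (subst (asm) integral_density) auto
  ultimately show ?thesis by (simp add: has_bochner_integral_iff)
qed

lemma has_bochner_integral_gaussian_fourier_real:
  fixes b y :: real
  assumes b: "b > 0"
  shows "has_bochner_integral lborel
           (\<lambda>s. exp (\<i> * complex_of_real (s * y)) * complex_of_real (exp (- b * s\<^sup>2)))
           (complex_of_real (sqrt (pi / b) * exp (- y\<^sup>2 / (4 * b))))"
proof -
  define c where "c = sqrt (2 * b)"
  have c: "c > 0" "c\<^sup>2 = 2 * b" using b by (simp_all add: c_def)
  have "has_bochner_integral lborel (\<lambda>s. std_normal_density (0 + c * s) *\<^sub>R iexp (y / c * (0 + c * s)))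
          (complex_of_real (exp (- (y / c)\<^sup>2 / 2)) /\<^sub>R \<bar>c\<bar>)"
    using has_bochner_integral_std_normal_fourier[of "y / c"] c
    by (subst (asm) lborel_has_bochner_integral_real_affine_iff[where c=c and t=0]) auto
  then have "has_bochner_integral lborel (\<lambda>s. complex_of_real (sqrt (2 * pi)) *
      (std_normal_density (c * s) *\<^sub>R iexp (y / c * (c * s))))
      (complex_of_real (sqrt (2 * pi)) * (complex_of_real (exp (- (y / c)\<^sup>2 / 2)) /\<^sub>R \<bar>c\<bar>))"
    by (intro has_bochner_integral_mult_right) simp
  moreover have "complex_of_real (sqrt (2 * pi)) * (std_normal_density (c * s) *\<^sub>R iexp (y / c * (c * s)))
      = exp (\<i> * complex_of_real (s * y)) * complex_of_real (exp (- b * s\<^sup>2))" for s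
    using c by (simp add: std_normal_density_def scaleR_conv_of_real power_mult_distrib mult_ac)
  moreover have "complex_of_real (sqrt (2 * pi)) * (complex_of_real (exp (- (y / c)\<^sup>2 / 2)) /\<^sub>R \<bar>c\<bar>)
      = complex_of_real (sqrt (pi / b) * exp (- y\<^sup>2 / (4 * b)))"
  proof -
    have "sqrt (2 * pi) / c = sqrt (pi / b)"
      using b by (simp add: c_def real_sqrt_divide[symmetric])
    moreover have "(y / c)\<^sup>2 / 2 = y\<^sup>2 / (4 * b)"
      using c by (simp add: power_divide)
    ultimately show ?thesis
      using c by (simp add: scaleR_conv_of_real field_simps)
  qed
  ultimately show ?thesis by simp
qed

lemma has_bochner_integral_prod_Basis:
  fixes f :: "'a::euclidean_space \<Rightarrow> real \<Rightarrow> 'b::{real_normed_field,banach,second_countable_topology}"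
  assumes int: "\<And>b. b \<in> Basis \<Longrightarrow> integrable lborel (f b)"
  shows "has_bochner_integral lborel (\<lambda>x::'a. \<Prod>b\<in>Basis. f b (x \<bullet> b))
           (\<Prod>b\<in>Basis. integral\<^sup>L lborel (f b))"
proof -
  interpret product_sigma_finite "\<lambda>_::'a. lborel::real measure"
    by (simp add: product_sigma_finite_def lborel.sigma_finite_measure_axioms)
  have [measurable]: "b \<in> Basis \<Longrightarrow> f b \<in> borel_measurable borel" for b
    using int[of b] by simp
  define T where "T g = (\<Sum>b\<in>(Basis::'a set). g b *\<^sub>R b)" for g
  have [measurable]: "T \<in> borel_measurable (\<Pi>\<^sub>M b\<in>(Basis::'a set). lborel)"
    unfolding T_def by measurable
  have T_inner: "T g \<bullet> b = g b" if "b \<in> Basis" for g b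
    using that unfolding T_def
    by (simp add: inner_sum_left inner_Basis if_distrib[of "\<lambda>x. g _ * x"] sum.delta' cong: if_cong)
  have prod_T: "(\<lambda>g. \<Prod>b\<in>Basis. f b (g b)) = (\<lambda>g. \<Prod>b\<in>Basis. f b (T g \<bullet> b))"
    by (simp add: T_inner)
  have [measurable]: "(\<lambda>x::'a. \<Prod>b\<in>Basis. f b (x \<bullet> b)) \<in> borel_measurable borel"
    by measurable
  have "integrable (\<Pi>\<^sub>M b\<in>(Basis::'a set). lborel) (\<lambda>g. \<Prod>b\<in>Basis. f b (g b))"
    by (rule product_integrable_prod) (auto intro: int)
  then have "integrable (distr (\<Pi>\<^sub>M b\<in>(Basis::'a set). lborel) borel T) (\<lambda>x::'a. \<Prod>b\<in>Basis. f b (x \<bullet> b))"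
    unfolding prod_T by (subst integrable_distr_eq) auto
  moreover have "(\<integral>g. (\<Prod>b\<in>Basis. f b (g b)) \<partial>(\<Pi>\<^sub>M b\<in>(Basis::'a set). lborel))
      = (\<Prod>b\<in>Basis. integral\<^sup>L lborel (f b))"
    by (rule product_integral_prod) (auto intro: int)
  then have "integral\<^sup>L (distr (\<Pi>\<^sub>M b\<in>(Basis::'a set). lborel) borel T) (\<lambda>x::'a. \<Prod>b\<in>Basis. f b (x \<bullet> b))
      = (\<Prod>b\<in>Basis. integral\<^sup>L lborel (f b))"
    unfolding prod_T by (subst integral_distr) auto
  ultimately show ?thesis
    unfolding T_def lborel_eq[symmetric] by (simp add: has_bochner_integral_iff)
qed

lemma power2_norm_eq_sum_Basis: "(norm (k::'a::euclidean_space))\<^sup>2 = (\<Sum>b\<in>Basis. (k \<bullet> b)\<^sup>2)"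
  unfolding power2_norm_eq_inner by (subst euclidean_inner) (simp add: power2_eq_square)

lemma has_bochner_integral_gaussian_fourier:
  fixes y :: "'a::euclidean_space" and b :: real
  assumes b: "b > 0"
  shows "has_bochner_integral lborel
     (\<lambda>k. exp (\<i> * complex_of_real (k \<bullet> y)) * complex_of_real (exp (- b * (norm k)\<^sup>2)))
     (complex_of_real ((pi / b) powr (real DIM('a) / 2) * exp (- (norm y)\<^sup>2 / (4 * b))))"
proof -
  define f where "f c s = exp (\<i> * complex_of_real (s * (y \<bullet> c))) * complex_of_real (exp (- b * s\<^sup>2))"
    for c :: 'a and s
  have f: "has_bochner_integral lborel (f c) (complex_of_real (sqrt (pi / b) * exp (- (y \<bullet> c)\<^sup>2 / (4 * b))))"
    for c
    unfolding f_def by (rule has_bochner_integral_gaussian_fourier_real[OF b])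
  have "has_bochner_integral lborel (\<lambda>x::'a. \<Prod>c\<in>Basis. f c (x \<bullet> c)) (\<Prod>c\<in>Basis. integral\<^sup>L lborel (f c))"
    using f by (intro has_bochner_integral_prod_Basis) (auto simp: has_bochner_integral_iff)
  moreover have "(\<Prod>c\<in>Basis. f c (x \<bullet> c))
      = exp (\<i> * complex_of_real (x \<bullet> y)) * complex_of_real (exp (- b * (norm x)\<^sup>2))" for x :: 'a
  proof -
    have "(\<Prod>c\<in>Basis. f c (x \<bullet> c)) = exp (\<Sum>c\<in>Basis. \<i> * complex_of_real ((x \<bullet> c) * (y \<bullet> c)))
        * complex_of_real (exp (\<Sum>c\<in>Basis. - b * (x \<bullet> c)\<^sup>2))"
      unfolding f_def prod.distrib by (simp add: exp_sum)
    then show ?thesis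
      by (simp add: sum_distrib_left euclidean_inner[of x y] power2_norm_eq_sum_Basis)
  qed
  moreover have "(\<Prod>c\<in>(Basis::'a set). integral\<^sup>L lborel (f c))
      = complex_of_real ((pi / b) powr (real DIM('a) / 2) * exp (- (norm y)\<^sup>2 / (4 * b)))"
  proof -
    have "(\<Prod>c\<in>(Basis::'a set). integral\<^sup>L lborel (f c))
        = complex_of_real (sqrt (pi / b) ^ DIM('a) * exp (\<Sum>c\<in>(Basis::'a set). - (y \<bullet> c)\<^sup>2 / (4 * b)))"
      using f by (simp add: has_bochner_integral_iff prod.distrib exp_sum)
    moreover have "sqrt (pi / b) ^ DIM('a) = (pi / b) powr (real DIM('a) / 2)"
      using b by (simp add: sqrt_def root_powr_inverse powr_realpow[symmetric] powr_powr)
    ultimately show ?thesis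
      by (simp add: power2_norm_eq_sum_Basis sum_divide_distrib sum_negf)
  qed
  ultimately show ?thesis by simp
qed

lemma integrable_gaussian:
  assumes "b > 0"
  shows "integrable lborel (\<lambda>k::'a::euclidean_space. exp (- b * (norm k)\<^sup>2))"
proof -
  have "integrable lborel (\<lambda>k::'a. complex_of_real (exp (- b * (norm k)\<^sup>2)))"
    using has_bochner_integral_gaussian_fourier[OF assms, of "0::'a"] by (simp add: has_bochner_integral_iff)
  then show ?thesis by (simp add: complex_of_real_integrable_eq)
qed

lemma power2_powr_half:
  fixes x :: real
  assumes "x > 0"
  shows "(x\<^sup>2) powr (real n / 2) = x ^ n"
proof -
  have "(x\<^sup>2) powr (real n / 2) = (x powr 2) powr (real n / 2)"
    using assms by simp
  also have "\<dots> = x powr (2 * (real n / 2))"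
    by (rule powr_powr)
  finally show ?thesis
    using assms by (simp add: powr_realpow)
qed

lemma gaussian_fourier_normalisation:
  fixes t K L :: real and n :: nat
  assumes "t > 0" "K > 0" "n > 0"
  shows "(pi / (t * (K / (2 * real n)))) powr (real n / 2) * exp (- L / (4 * (t * (K / (2 * real n)))))
    = (2 * pi) ^ n * ((real n / (2 * pi * K * t)) powr (real n / 2) * exp (- real n * L / (2 * t * K)))"
proof -
  have "pi / (t * (K / (2 * real n))) = (2 * pi)\<^sup>2 * (real n / (2 * pi * K * t))"
    using assms by (simp add: field_simps power2_eq_square)
  then have "(pi / (t * (K / (2 * real n)))) powr (real n / 2)
      = ((2 * pi)\<^sup>2) powr (real n / 2) * (real n / (2 * pi * K * t)) powr (real n / 2)"
    by (simp only: powr_mult)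
  then have "(pi / (t * (K / (2 * real n)))) powr (real n / 2)
      = (2 * pi) ^ n * (real n / (2 * pi * K * t)) powr (real n / 2)"
    by (simp only: power2_powr_half pi_gt_zero zero_less_mult_iff zero_less_numeral simp_thms)
  moreover have "- L / (4 * (t * (K / (2 * real n)))) = - real n * L / (2 * t * K)"
    using assms by (simp add: field_simps)
  ultimately show ?thesis
    by simp
qed

lemma one_minus_cos_bounds: "0 \<le> 1 - cos w \<and> 1 - cos w \<le> w\<^sup>2 / 2" for w :: real
proof -
  have "cos w = 1 - 2 * sin (w / 2) ^ 2" using cos_double_sin[of "w / 2"] by simp
  moreover have "sin (w / 2) ^ 2 \<le> (w / 2) ^ 2"
    using abs_sin_x_le_abs_x[of "w / 2"] by (metis abs_le_square_iff)
  ultimately show ?thesis by (simp add: power_divide)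
qed

lemma scaled_one_minus_cos_bounds:
  assumes "t > 0"
  shows "0 \<le> t * (1 - cos (v / sqrt t)) \<and> t * (1 - cos (v / sqrt t)) \<le> v\<^sup>2 / 2"
proof -
  have "t * (1 - cos (v / sqrt t)) \<le> t * ((v / sqrt t)\<^sup>2 / 2)"
    using one_minus_cos_bounds[of "v / sqrt t"] assms by (intro mult_left_mono) auto
  then show ?thesis
    using one_minus_cos_bounds[of "v / sqrt t"] assms by (simp add: power_divide)
qed

lemma tendsto_scaled_one_minus_cos:
  "((\<lambda>t::real. t * (1 - cos (v / sqrt t))) \<longlongrightarrow> v\<^sup>2 / 2) at_top"
proof -
  have "((\<lambda>t::real. t * (1 - cos (v / sqrt t))) \<longlongrightarrow> v * v / 2) at_top" by real_asymp
  then show ?thesis by (simp add: power2_eq_square)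
qed

lemma abs_inverse_sqrt_power:
  assumes "t > 0"
  shows "\<bar>1 / sqrt t\<bar> ^ n = t powr (- real n / 2)"
proof -
  have "\<bar>1 / sqrt t\<bar> = t powr (- (1 / 2))"
    using assms by (simp add: powr_half_sqrt[symmetric] powr_minus_divide)
  then show ?thesis
    using assms by (simp add: powr_power)
qed

lemma norm_inverse_sqrt_scaleR_power2:
  assumes "t > 0"
  shows "t * c * (norm ((1 / sqrt t) *\<^sub>R k))\<^sup>2 = c * (norm k)\<^sup>2"
  using assms by (simp add: power_mult_distrib power_divide)

lemma lborel_integral_scaleR:
  fixes f :: "'a::euclidean_space \<Rightarrow> real"
  assumes "c \<noteq> 0" and [measurable]: "f \<in> borel_measurable borel"
  shows "integral\<^sup>L lborel f = \<bar>c\<bar> ^ DIM('a) * integral\<^sup>L lborel (\<lambda>x. f (c *\<^sub>R x))"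
  by (subst lborel_affine[OF assms(1), of 0]) (simp add: integral_density integral_distr)

lemma integrable_count_space_if_summable_on:
  fixes f :: "'a \<Rightarrow> real"
  assumes "f summable_on UNIV"
  shows "integrable (count_space UNIV) f"
proof -
  have "(\<lambda>x. norm (f x)) summable_on UNIV"
    using assms summable_on_iff_abs_summable_on_real by blast
  then have "Infinite_Set_Sum.abs_summable_on f UNIV"
    using abs_summable_equivalent by blast
  then show ?thesis
    by (simp add: Infinite_Set_Sum.abs_summable_on_def)
qed

lemma infsum_eq_integral_count_space:
  fixes f :: "'a \<Rightarrow> 'b::{banach, second_countable_topology}"
  assumes "integrable (count_space UNIV) f"
  shows "infsum f UNIV = integral\<^sup>L (count_space UNIV) f"
  using infsetsum_infsum[of f UNIV] assms
  by (simp add: infsetsum_def Infinite_Set_Sum.abs_summable_on_def)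

lemma integral_count_space_reindex:
  fixes f h :: "'a \<Rightarrow> 'b::{banach, second_countable_topology}"
  assumes "bij g" "\<And>x. f (g x) = h x"
    and "integrable (count_space UNIV) f" "integrable (count_space UNIV) h"
  shows "integral\<^sup>L (count_space UNIV) h = integral\<^sup>L (count_space UNIV) f"
proof -
  have "infsum h UNIV = infsum f UNIV"
    using infsum_reindex_bij_betw[of g UNIV UNIV f] assms(1,2) by simp
  then show ?thesis
    using assms(3,4) by (simp add: infsum_eq_integral_count_space)
qed

definition real_vec :: "int^'n \<Rightarrow> real^'n" where
  "real_vec x = (\<chi> i. real_of_int (x $ i))"

lemma ldot_eq_inner: "ldot k x = k \<bullet> real_vec x"
  by (simp add: ldot_def real_vec_def inner_vec_def)

lemma lnorm2_eq_norm: "lnorm2 x = (norm (real_vec x))\<^sup>2"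
  unfolding power2_norm_eq_inner by (simp add: lnorm2_def real_vec_def inner_vec_def power2_eq_square)

lemma lnorm2_nonneg: "0 \<le> lnorm2 x"
  by (simp add: lnorm2_def sum_nonneg)

lemma real_vec_uminus: "real_vec (- x) = - real_vec x"
  by (simp add: real_vec_def vec_eq_iff)

lemma abs_real_vec_mult_le_lnorm2: "\<bar>real_vec x $ i * real_vec x $ j\<bar> \<le> lnorm2 x"
proof -
  have le: "(real_vec x $ l)\<^sup>2 \<le> lnorm2 x" for l
    unfolding lnorm2_def real_vec_def by (auto intro: member_le_sum)
  have "2 * (\<bar>real_vec x $ i\<bar> * \<bar>real_vec x $ j\<bar>) \<le> (real_vec x $ i)\<^sup>2 + (real_vec x $ j)\<^sup>2"
    using sum_squares_bound[of "\<bar>real_vec x $ i\<bar>" "\<bar>real_vec x $ j\<bar>"] by (simp add: mult.assoc)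
  then show ?thesis
    using le[of i] le[of j] by (simp add: abs_mult)
qed

lemma inner_real_vec_power2_le: "(k \<bullet> real_vec x)\<^sup>2 \<le> (norm k)\<^sup>2 * lnorm2 x"
proof -
  have "\<bar>k \<bullet> real_vec x\<bar> \<le> \<bar>norm k * norm (real_vec x)\<bar>"
    using Cauchy_Schwarz_ineq2[of k "real_vec x"] by simp
  then have "(k \<bullet> real_vec x)\<^sup>2 \<le> (norm k * norm (real_vec x))\<^sup>2"
    by (metis abs_le_square_iff)
  then show ?thesis
    by (simp add: lnorm2_eq_norm power_mult_distrib)
qed

section \<open>Symmetric step distributions with finite second moment\<close>

locale symmetric_step_distribution =
  fixes J :: "int^'n \<Rightarrow> real" and K1 :: real
  assumes symmetric: "Zd_symmetric J"
    and has_sum_J: "(J has_sum 1) UNIV"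
    and has_sum_second_moment: "((\<lambda>x. lnorm2 x * J x) has_sum K1) UNIV"
    and summable_abs_second_moment: "(\<lambda>x. lnorm2 x * \<bar>J x\<bar>) summable_on UNIV"
begin

lemma integrable_J: "integrable (count_space UNIV) J"
  using has_sum_J integrable_count_space_if_summable_on by (auto simp: summable_on_def)

lemma integral_J: "integral\<^sup>L (count_space UNIV) J = 1"
  using has_sum_J integrable_J infsum_eq_integral_count_space infsumI by metis

lemma integrable_abs_second_moment: "integrable (count_space UNIV) (\<lambda>x. lnorm2 x * \<bar>J x\<bar>)"
  using summable_abs_second_moment integrable_count_space_if_summable_on by blast

lemma integral_second_moment: "integral\<^sup>L (count_space UNIV) (\<lambda>x. lnorm2 x * J x) = K1"
proof -
  have "integrable (count_space UNIV) (\<lambda>x. lnorm2 x * J x)"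
    using has_sum_second_moment integrable_count_space_if_summable_on by (auto simp: summable_on_def)
  then show ?thesis
    using has_sum_second_moment infsum_eq_integral_count_space infsumI by metis
qed

lemma J_flip_signs: "(\<forall>i. s i = 1 \<or> s i = -1) \<Longrightarrow> J (\<chi> i. (s i :: int) * x $ i) = J x"
  using symmetric unfolding Zd_symmetric_def by blast

lemma J_permute: "bij (p :: 'n \<Rightarrow> 'n) \<Longrightarrow> J (\<chi> i. x $ p i) = J x"
  using symmetric unfolding Zd_symmetric_def by blast

lemma J_uminus: "J (- x) = J x"
proof -
  have "(\<chi> i. (-1::int) * x $ i) = - x"
    by (simp add: vec_eq_iff)
  then show ?thesis
    using J_flip_signs[of "\<lambda>_. -1" x] by simp
qed

definition charfun :: "real^'n \<Rightarrow> real" where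
  "charfun k = integral\<^sup>L (count_space UNIV) (\<lambda>x. J x * cos (k \<bullet> real_vec x))"

lemma integrable_J_cos: "integrable (count_space UNIV) (\<lambda>x. J x * cos (k \<bullet> real_vec x))"
  by (rule Bochner_Integration.integrable_bound[OF integrable_J])
    (auto intro!: AE_I2 mult_left_le simp: abs_mult)

lemma integrable_J_sin: "integrable (count_space UNIV) (\<lambda>x. J x * sin (k \<bullet> real_vec x))"
  by (rule Bochner_Integration.integrable_bound[OF integrable_J])
    (auto intro!: AE_I2 mult_left_le simp: abs_mult)

lemma integral_J_sin: "integral\<^sup>L (count_space UNIV) (\<lambda>x. J x * sin (k \<bullet> real_vec x)) = 0"
proof -
  have "bij (uminus :: int^'n \<Rightarrow> int^'n)"
    by (rule o_bij[of uminus]) (auto simp: fun_eq_iff)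
  then have "integral\<^sup>L (count_space UNIV) (\<lambda>x. - (J x * sin (k \<bullet> real_vec x)))
      = integral\<^sup>L (count_space UNIV) (\<lambda>x. J x * sin (k \<bullet> real_vec x))"
    by (rule integral_count_space_reindex) (auto simp: J_uminus real_vec_uminus integrable_J_sin)
  then show ?thesis by simp
qed

lemma Jhat_eq_charfun: "Jhat J k = complex_of_real (charfun k)"
proof -
  have expand: "complex_of_real (J x) * exp (- \<i> * complex_of_real (ldot k x))
     = complex_of_real (J x * cos (k \<bullet> real_vec x)) - \<i> * complex_of_real (J x * sin (k \<bullet> real_vec x))"
    for x
    by (simp add: complex_eq_iff ldot_eq_inner Re_exp Im_exp)
  have cos: "integrable (count_space UNIV) (\<lambda>x. complex_of_real (J x * cos (k \<bullet> real_vec x)))"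
    using integrable_J_cos by (subst complex_of_real_integrable_eq)
  have sin: "integrable (count_space UNIV) (\<lambda>x. \<i> * complex_of_real (J x * sin (k \<bullet> real_vec x)))"
    using integrable_J_sin by (intro Bochner_Integration.integrable_mult_right) (subst complex_of_real_integrable_eq)
  have "Jhat J k = integral\<^sup>L (count_space UNIV)
      (\<lambda>x. complex_of_real (J x) * exp (- \<i> * complex_of_real (ldot k x)))"
    unfolding Jhat_def expand using cos sin
    by (intro infsum_eq_integral_count_space Bochner_Integration.integrable_diff)
  also have "\<dots> = complex_of_real (charfun k)"
    unfolding expand charfun_def Bochner_Integration.integral_diff[OF cos sin]
    by (simp only: integral_mult_right_zero integral_complex_of_real integral_J_sin) simp
  finally show ?thesis .
qed

lemma charfun_0: "charfun 0 = 1"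
  by (simp add: charfun_def integral_J)

lemma continuous_on_charfun: "continuous_on UNIV charfun"
proof -
  have "isCont charfun k" for k
    unfolding continuous_at_sequentially comp_def
  proof (intro allI impI)
    fix X assume X: "X \<longlonglongrightarrow> k"
    show "(\<lambda>n. charfun (X n)) \<longlonglongrightarrow> charfun k"
      unfolding charfun_def
    proof (rule integral_dominated_convergence[where w="\<lambda>x. \<bar>J x\<bar>"])
      show "integrable (count_space UNIV) (\<lambda>x. \<bar>J x\<bar>)"
        using integrable_J by auto
      show "AE x in count_space UNIV. (\<lambda>n. J x * cos (X n \<bullet> real_vec x)) \<longlonglongrightarrow> J x * cos (k \<bullet> real_vec x)"
        using X by (auto intro!: tendsto_intros)
      show "AE x in count_space UNIV. norm (J x * cos (X n \<bullet> real_vec x)) \<le> \<bar>J x\<bar>" for n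
        by (auto intro!: AE_I2 mult_left_le simp: abs_mult)
    qed auto
  qed
  then show ?thesis by (simp add: continuous_at_imp_continuous_on)
qed

definition covariance :: "'n \<Rightarrow> 'n \<Rightarrow> real" where
  "covariance i j = integral\<^sup>L (count_space UNIV) (\<lambda>x. J x * (real_vec x $ i * real_vec x $ j))"

lemma integrable_covariance: "integrable (count_space UNIV) (\<lambda>x. J x * (real_vec x $ i * real_vec x $ j))"
proof (rule Bochner_Integration.integrable_bound[OF integrable_abs_second_moment])
  show "AE x in count_space UNIV. norm (J x * (real_vec x $ i * real_vec x $ j)) \<le> norm (lnorm2 x * \<bar>J x\<bar>)"
  proof (intro AE_I2)
    fix x
    have "\<bar>J x\<bar> * \<bar>real_vec x $ i * real_vec x $ j\<bar> \<le> \<bar>J x\<bar> * lnorm2 x"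
      by (intro mult_left_mono abs_real_vec_mult_le_lnorm2) simp
    then show "norm (J x * (real_vec x $ i * real_vec x $ j)) \<le> norm (lnorm2 x * \<bar>J x\<bar>)"
      using lnorm2_nonneg[of x] by (simp add: abs_mult mult.commute)
  qed
qed auto

lemma covariance_offdiag:
  assumes "i \<noteq> j"
  shows "covariance i j = 0"
proof -
  define g :: "int^'n \<Rightarrow> int^'n" where "g x = (\<chi> l. (if l = i then -1 else 1) * x $ l)" for x
  have "bij g"
    by (rule o_bij[of g]) (auto simp: fun_eq_iff g_def vec_eq_iff)
  moreover have "J (g x) * (real_vec (g x) $ i * real_vec (g x) $ j) = - (J x * (real_vec x $ i * real_vec x $ j))"
    for x
    using assms J_flip_signs[of "\<lambda>l. if l = i then -1 else 1" x] by (simp add: g_def real_vec_def)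
  ultimately have "integral\<^sup>L (count_space UNIV) (\<lambda>x. - (J x * (real_vec x $ i * real_vec x $ j))) = covariance i j"
    unfolding covariance_def by (rule integral_count_space_reindex) (auto intro: integrable_covariance)
  then show ?thesis by (simp add: covariance_def)
qed

lemma covariance_diag_eq: "covariance i i = covariance j j"
proof -
  define p :: "'n \<Rightarrow> 'n" where "p = Transposition.transpose i j"
  define g :: "int^'n \<Rightarrow> int^'n" where "g x = (\<chi> l. x $ p l)" for x
  have "bij p"
    by (simp add: p_def)
  then have "bij g"
    by (intro o_bij[of g]) (auto simp: fun_eq_iff g_def vec_eq_iff p_def)
  moreover have "J (g x) * (real_vec (g x) $ i * real_vec (g x) $ i) = J x * (real_vec x $ j * real_vec x $ j)"
    for x
    using J_permute[OF \<open>bij p\<close>, of x] by (simp add: g_def real_vec_def p_def)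
  ultimately have "covariance j j = covariance i i"
    unfolding covariance_def by (rule integral_count_space_reindex) (auto intro: integrable_covariance)
  then show ?thesis by simp
qed

lemma covariance_diag: "covariance i i = K1 / real CARD('n)"
proof -
  have "(\<Sum>l\<in>UNIV. covariance l l)
      = integral\<^sup>L (count_space UNIV) (\<lambda>x. \<Sum>l\<in>UNIV. J x * (real_vec x $ l * real_vec x $ l))"
    unfolding covariance_def by (simp add: integrable_covariance)
  also have "(\<lambda>x. \<Sum>l\<in>UNIV. J x * (real_vec x $ l * real_vec x $ l)) = (\<lambda>x. lnorm2 x * J x)"
    by (auto simp: lnorm2_def real_vec_def sum_distrib_left power2_eq_square mult_ac)
  finally have "(\<Sum>l\<in>UNIV. covariance l l) = K1"
    by (simp add: integral_second_moment)
  moreover have "(\<Sum>l\<in>UNIV. covariance l l) = (\<Sum>l\<in>(UNIV::'n set). covariance i i)"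
    by (rule sum.cong) (auto intro: covariance_diag_eq)
  ultimately show ?thesis by (simp add: field_simps)
qed

lemma integral_J_inner_power2:
  "integral\<^sup>L (count_space UNIV) (\<lambda>x. J x * (k \<bullet> real_vec x)\<^sup>2) = K1 * (norm k)\<^sup>2 / real CARD('n)"
proof -
  have "J x * (k \<bullet> real_vec x)\<^sup>2
      = (\<Sum>i\<in>UNIV. \<Sum>j\<in>UNIV. (k$i * k$j) * (J x * (real_vec x $ i * real_vec x $ j)))" for x
    by (simp add: inner_vec_def power2_eq_square sum_product sum_distrib_left mult_ac)
  then have "integral\<^sup>L (count_space UNIV) (\<lambda>x. J x * (k \<bullet> real_vec x)\<^sup>2)
      = (\<Sum>i\<in>UNIV. \<Sum>j\<in>UNIV. (k$i * k$j) * covariance i j)"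
    unfolding covariance_def by (simp add: integrable_covariance)
  also have "\<dots> = (\<Sum>i\<in>UNIV. (k$i * k$i) * covariance i i)"
  proof (rule sum.cong)
    fix i
    have "(\<Sum>j\<in>UNIV. (k$i * k$j) * covariance i j) = (\<Sum>j\<in>UNIV. if j = i then (k$i * k$i) * covariance i i else 0)"
      by (rule sum.cong) (auto simp: covariance_offdiag)
    then show "(\<Sum>j\<in>UNIV. (k$i * k$j) * covariance i j) = (k$i * k$i) * covariance i i"
      by simp
  qed simp
  also have "\<dots> = K1 * (norm k)\<^sup>2 / real CARD('n)"
    unfolding covariance_diag power2_norm_eq_inner inner_vec_def
    by (simp add: sum_distrib_left sum_distrib_right sum_divide_distrib mult_ac)
  finally show ?thesis .
qed

lemma tendsto_scaled_one_minus_charfun: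
  "((\<lambda>t. t * (1 - charfun ((1 / sqrt t) *\<^sub>R k))) \<longlongrightarrow> K1 * (norm k)\<^sup>2 / (2 * real CARD('n))) at_top"
proof -
  define s where "s t x = J x * (t * (1 - cos ((k \<bullet> real_vec x) / sqrt t)))" for t x
  have "integral\<^sup>L (count_space UNIV) (s t) = t * (1 - charfun ((1 / sqrt t) *\<^sub>R k))" for t
  proof -
    have "s t = (\<lambda>x. t * (J x - J x * cos (((1 / sqrt t) *\<^sub>R k) \<bullet> real_vec x)))"
      by (auto simp: s_def algebra_simps)
    then show ?thesis
      using integrable_J integrable_J_cos[of "(1 / sqrt t) *\<^sub>R k"] by (simp add: charfun_def integral_J)
  qed
  moreover have "((\<lambda>t. integral\<^sup>L (count_space UNIV) (s t))
      \<longlongrightarrow> integral\<^sup>L (count_space UNIV) (\<lambda>x. J x * ((k \<bullet> real_vec x)\<^sup>2 / 2))) at_top"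
  proof (rule integral_dominated_convergence_at_top[where w="\<lambda>x. (norm k)\<^sup>2 / 2 * (lnorm2 x * \<bar>J x\<bar>)"])
    show "integrable (count_space UNIV) (\<lambda>x. (norm k)\<^sup>2 / 2 * (lnorm2 x * \<bar>J x\<bar>))"
      using integrable_abs_second_moment by auto
    show "AE x in count_space UNIV. ((\<lambda>t. s t x) \<longlongrightarrow> J x * ((k \<bullet> real_vec x)\<^sup>2 / 2)) at_top"
      unfolding s_def by (intro AE_I2 tendsto_mult_left tendsto_scaled_one_minus_cos)
    show "\<forall>\<^sub>F t in at_top. AE x in count_space UNIV. norm (s t x) \<le> (norm k)\<^sup>2 / 2 * (lnorm2 x * \<bar>J x\<bar>)"
    proof (rule eventually_mono[OF eventually_gt_at_top[of 0]], intro AE_I2)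
      fix t :: real and x assume "t > 0"
      note bounds = scaled_one_minus_cos_bounds[OF this, of "k \<bullet> real_vec x"]
      have "norm (s t x) = \<bar>J x\<bar> * (t * (1 - cos ((k \<bullet> real_vec x) / sqrt t)))"
        using bounds \<open>t > 0\<close> by (simp add: s_def abs_mult)
      also have "\<dots> \<le> \<bar>J x\<bar> * ((norm k)\<^sup>2 * lnorm2 x / 2)"
        using bounds inner_real_vec_power2_le[of k x] by (intro mult_left_mono) auto
      finally show "norm (s t x) \<le> (norm k)\<^sup>2 / 2 * (lnorm2 x * \<bar>J x\<bar>)"
        by (simp add: mult_ac)
    qed
  qed auto
  moreover have "integral\<^sup>L (count_space UNIV) (\<lambda>x. J x * ((k \<bullet> real_vec x)\<^sup>2 / 2))
      = K1 * (norm k)\<^sup>2 / (2 * real CARD('n))"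
    using integral_J_inner_power2[of k] by (simp add: mult.assoc[symmetric])
  ultimately show ?thesis
    by (simp only:)
qed

end

section \<open>The local limit theorem under an infrared bound\<close>

locale infrared_step_distribution = symmetric_step_distribution J K1
  for J :: "int^'n \<Rightarrow> real" and K1 :: real +
  fixes K0 :: real
  assumes K0_pos: "K0 > 0" and K1_pos: "K1 > 0"
    and infrared: "\<And>k::real^'n. (\<forall>i. - pi \<le> k$i \<and> k$i \<le> pi) \<Longrightarrow>
        Re (Jhat J 0 - Jhat J k) \<ge> K0 * (norm k)^2 / (2 * real CARD('n))"
begin

definition brillouin_zone :: "(real^'n) set" where
  "brillouin_zone = cbox (\<chi> i. - pi) (\<chi> i. pi)"

lemma mem_brillouin_zone: "k \<in> brillouin_zone \<longleftrightarrow> (\<forall>i. - pi \<le> k$i \<and> k$i \<le> pi)"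
  by (simp add: brillouin_zone_def mem_box_cart)

lemma sets_brillouin_zone [measurable]: "brillouin_zone \<in> sets borel"
  by (simp add: brillouin_zone_def)

lemma integrable_indicator_brillouin_zone: "integrable lborel (indicator brillouin_zone :: real^'n \<Rightarrow> real)"
  using emeasure_lborel_cbox_finite by (simp add: brillouin_zone_def integrable_indicator_iff)

lemma eventually_inverse_sqrt_scaleR_in_brillouin_zone:
  "\<forall>\<^sub>F t in at_top. (1 / sqrt t) *\<^sub>R k \<in> brillouin_zone"
proof -
  have "((\<lambda>t. 1 / sqrt t) \<longlongrightarrow> 0) at_top"
    by real_asymp
  then have "((\<lambda>t. (1 / sqrt t) *\<^sub>R k) \<longlongrightarrow> 0) at_top"
    using tendsto_scaleR[OF _ tendsto_const, of _ 0 at_top k] by simp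
  moreover have "(0 :: real^'n) \<in> box (\<chi> i. - pi) (\<chi> i. pi)"
    by (simp add: mem_box_cart)
  ultimately have "\<forall>\<^sub>F t in at_top. (1 / sqrt t) *\<^sub>R k \<in> box (\<chi> i. - pi) (\<chi> i. pi)"
    by (rule topological_tendstoD[OF _ open_box])
  moreover have "box (\<chi> i. - pi) (\<chi> i. pi) \<subseteq> brillouin_zone"
    unfolding brillouin_zone_def by (rule box_subset_cbox)
  ultimately show ?thesis
    by (auto elim: eventually_mono)
qed

definition gaussian_coeff :: real where
  "gaussian_coeff = K1 / (2 * real CARD('n))"

definition infrared_coeff :: real where
  "infrared_coeff = K0 / (2 * real CARD('n))"

lemma gaussian_coeff_pos: "gaussian_coeff > 0"
  using K1_pos by (simp add: gaussian_coeff_def)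

lemma infrared_coeff_pos: "infrared_coeff > 0"
  using K0_pos by (simp add: infrared_coeff_def)

lemma infrared_coeff_le_one_minus_charfun:
  "k \<in> brillouin_zone \<Longrightarrow> infrared_coeff * (norm k)\<^sup>2 \<le> 1 - charfun k"
  using infrared[of k] by (simp add: mem_brillouin_zone Jhat_eq_charfun charfun_0 infrared_coeff_def)

lemma one_minus_charfun_nonneg: "k \<in> brillouin_zone \<Longrightarrow> 0 \<le> 1 - charfun k"
  using infrared_coeff_le_one_minus_charfun[of k] infrared_coeff_pos
  by (meson order_trans mult_nonneg_nonneg less_imp_le zero_le_power2)

lemma borel_measurable_charfun [measurable]: "charfun \<in> borel_measurable borel"
  by (rule borel_measurable_continuous_onI[OF continuous_on_charfun])

definition lclt_integrand :: "real \<Rightarrow> real^'n \<Rightarrow> real" where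
  "lclt_integrand t k = \<bar>indicator brillouin_zone k * exp (- t * (1 - charfun k))
     - exp (- (t * gaussian_coeff) * (norm k)\<^sup>2)\<bar>"

definition lclt_error :: "real \<Rightarrow> real" where
  "lclt_error t = integral\<^sup>L lborel (lclt_integrand t) / (2 * pi) ^ CARD('n)"

lemma lclt_integrand_nonneg: "0 \<le> lclt_integrand t k"
  by (simp add: lclt_integrand_def)

lemma borel_measurable_lclt_integrand [measurable]: "lclt_integrand t \<in> borel_measurable borel"
  unfolding lclt_integrand_def by measurable

lemma integrable_lclt_integrand:
  assumes "t > 0"
  shows "integrable lborel (lclt_integrand t)"
proof (rule Bochner_Integration.integrable_bound)
  show "integrable lborel (\<lambda>k. indicator brillouin_zone k + exp (- (t * gaussian_coeff) * (norm k)\<^sup>2))"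
    using integrable_indicator_brillouin_zone integrable_gaussian[of "t * gaussian_coeff"] assms gaussian_coeff_pos
    by (intro Bochner_Integration.integrable_add) auto
  show "AE k in lborel. norm (lclt_integrand t k)
      \<le> norm (indicator brillouin_zone k + exp (- (t * gaussian_coeff) * (norm k)\<^sup>2))"
  proof (intro AE_I2)
    fix k
    have "indicator brillouin_zone k * exp (- t * (1 - charfun k)) \<le> indicator brillouin_zone k"
      using one_minus_charfun_nonneg[of k] assms by (auto simp: indicator_def mult_nonneg_nonneg)
    moreover have "0 \<le> indicator brillouin_zone k * exp (- t * (1 - charfun k))"
      by (simp add: indicator_def)
    ultimately show "norm (lclt_integrand t k)
        \<le> norm (indicator brillouin_zone k + exp (- (t * gaussian_coeff) * (norm k)\<^sup>2))"
      unfolding lclt_integrand_def real_norm_def using exp_gt_zero by (smt (verit))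
  qed
qed simp

lemma norm_integrand_diff:
  "norm (indicator brillouin_zone k *\<^sub>R
       (exp (\<i> * complex_of_real (k \<bullet> y)) * complex_of_real (exp (- t * (1 - charfun k))))
     - exp (\<i> * complex_of_real (k \<bullet> y)) * complex_of_real (exp (- (t * gaussian_coeff) * (norm k)\<^sup>2)))
   = lclt_integrand t k"
proof -
  have "indicator brillouin_zone k *\<^sub>R
       (exp (\<i> * complex_of_real (k \<bullet> y)) * complex_of_real (exp (- t * (1 - charfun k))))
     - exp (\<i> * complex_of_real (k \<bullet> y)) * complex_of_real (exp (- (t * gaussian_coeff) * (norm k)\<^sup>2))
   = exp (\<i> * complex_of_real (k \<bullet> y)) * complex_of_real
       (indicator brillouin_zone k * exp (- t * (1 - charfun k)) - exp (- (t * gaussian_coeff) * (norm k)\<^sup>2))"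
    by (simp add: scaleR_conv_of_real algebra_simps)
  then show ?thesis
    by (simp only: norm_mult norm_exp_i_times norm_of_real lclt_integrand_def mult_1_left)
qed

lemma has_bochner_integral_It:
  fixes x :: "int^'n"
  assumes "t \<ge> 0"
  shows "has_bochner_integral lborel
    (\<lambda>k. indicator brillouin_zone k *\<^sub>R
       (exp (\<i> * complex_of_real (k \<bullet> real_vec x)) * complex_of_real (exp (- t * (1 - charfun k)))))
    (complex_of_real ((2 * pi) ^ CARD('n)) * It J t x)"
proof -
  define \<phi> where "\<phi> k = exp (\<i> * complex_of_real (k \<bullet> real_vec x)) * complex_of_real (exp (- t * (1 - charfun k)))"
    for k
  have "(\<lambda>k. exp (\<i> * complex_of_real (ldot k x)) * exp (- complex_of_real t * (1 - Jhat J k))) = \<phi>"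
  proof
    fix k
    have "- complex_of_real t * (1 - Jhat J k) = complex_of_real (- t * (1 - charfun k))"
      by (simp add: Jhat_eq_charfun)
    then show "exp (\<i> * complex_of_real (ldot k x)) * exp (- complex_of_real t * (1 - Jhat J k)) = \<phi> k"
      by (simp only: \<phi>_def ldot_eq_inner exp_of_real)
  qed
  then have It: "It J t x = integral brillouin_zone \<phi> / complex_of_real ((2 * pi) ^ CARD('n))"
    unfolding It_def brillouin_zone_def by simp
  have int: "integrable lborel (\<lambda>k. indicator brillouin_zone k *\<^sub>R \<phi> k)"
  proof (rule Bochner_Integration.integrable_bound[OF integrable_indicator_brillouin_zone])
    show "AE k in lborel. norm (indicator brillouin_zone k *\<^sub>R \<phi> k) \<le> norm (indicator brillouin_zone k :: real)"
      using one_minus_charfun_nonneg assms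
      by (intro AE_I2) (auto simp: \<phi>_def norm_mult indicator_def mult_nonneg_nonneg)
  qed (simp add: \<phi>_def)
  have "integral brillouin_zone \<phi> = integral UNIV (\<lambda>k. if k \<in> brillouin_zone then \<phi> k else 0)"
    by (rule Henstock_Kurzweil_Integration.integral_restrict_UNIV[symmetric])
  also have "(\<lambda>k. if k \<in> brillouin_zone then \<phi> k else 0) = (\<lambda>k. indicator brillouin_zone k *\<^sub>R \<phi> k)"
    by (auto simp: indicator_def fun_eq_iff)
  also have "integral UNIV (\<lambda>k. indicator brillouin_zone k *\<^sub>R \<phi> k)
      = integral\<^sup>L lborel (\<lambda>k. indicator brillouin_zone k *\<^sub>R \<phi> k)"
    by (rule integral_lborel[OF int])
  finally show ?thesis
    using int unfolding It \<phi>_def[symmetric] by (simp add: has_bochner_integral_iff)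
qed

lemma has_bochner_integral_gaussian_term:
  fixes x :: "int^'n"
  assumes "t > 0"
  shows "has_bochner_integral lborel
    (\<lambda>k. exp (\<i> * complex_of_real (k \<bullet> real_vec x)) * complex_of_real (exp (- (t * gaussian_coeff) * (norm k)\<^sup>2)))
    (complex_of_real ((2 * pi) ^ CARD('n)
       * ((real CARD('n) / (2 * pi * K1 * t)) powr (real CARD('n) / 2)
          * exp (- real CARD('n) * lnorm2 x / (2 * t * K1)))))"
proof -
  have tq: "t * gaussian_coeff > 0"
    using assms gaussian_coeff_pos by simp
  have "has_bochner_integral lborel
    (\<lambda>k. exp (\<i> * complex_of_real (k \<bullet> real_vec x)) * complex_of_real (exp (- (t * gaussian_coeff) * (norm k)\<^sup>2)))
    (complex_of_real ((pi / (t * gaussian_coeff)) powr (real CARD('n) / 2)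
       * exp (- (norm (real_vec x))\<^sup>2 / (4 * (t * gaussian_coeff)))))"
    using has_bochner_integral_gaussian_fourier[OF tq, of "real_vec x"] by (simp only: DIM_cart DIM_real mult_1_right)
  moreover have "(pi / (t * gaussian_coeff)) powr (real CARD('n) / 2) * exp (- (norm (real_vec x))\<^sup>2 / (4 * (t * gaussian_coeff)))
    = (2 * pi) ^ CARD('n) * ((real CARD('n) / (2 * pi * K1 * t)) powr (real CARD('n) / 2)
          * exp (- real CARD('n) * lnorm2 x / (2 * t * K1)))"
    unfolding gaussian_coeff_def lnorm2_eq_norm by (rule gaussian_fourier_normalisation[OF assms K1_pos]) simp
  ultimately show ?thesis
    by (simp only:)
qed

lemma norm_It_minus_gaussian_le:
  fixes x :: "int^'n"
  assumes "t > 0"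
  shows "norm (It J t x - complex_of_real
           ((real CARD('n) / (2 * pi * K1 * t)) powr (real CARD('n) / 2)
            * exp (- real CARD('n) * lnorm2 x / (2 * t * K1)))) \<le> lclt_error t"
proof -
  let ?G = "(real CARD('n) / (2 * pi * K1 * t)) powr (real CARD('n) / 2)
            * exp (- real CARD('n) * lnorm2 x / (2 * t * K1))"
  let ?f = "\<lambda>k. indicator brillouin_zone k *\<^sub>R
       (exp (\<i> * complex_of_real (k \<bullet> real_vec x)) * complex_of_real (exp (- t * (1 - charfun k))))
     - exp (\<i> * complex_of_real (k \<bullet> real_vec x)) * complex_of_real (exp (- (t * gaussian_coeff) * (norm k)\<^sup>2))"
  have f: "has_bochner_integral lborel ?f
      (complex_of_real ((2 * pi) ^ CARD('n)) * (It J t x - complex_of_real ?G))"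
    using has_bochner_integral_diff[OF has_bochner_integral_It has_bochner_integral_gaussian_term] assms
    by (simp add: right_diff_distrib)
  have "norm (integral\<^sup>L lborel ?f) \<le> integral\<^sup>L lborel (lclt_integrand t)"
  proof (rule Bochner_Integration.integral_norm_bound_integral)
    show "integrable lborel ?f"
      using f by (simp add: has_bochner_integral_iff)
    show "integrable lborel (lclt_integrand t)"
      using integrable_lclt_integrand[OF assms] .
    show "norm (?f k) \<le> lclt_integrand t k" for k
      by (simp only: norm_integrand_diff order_refl)
  qed
  moreover have "integral\<^sup>L lborel ?f = complex_of_real ((2 * pi) ^ CARD('n)) * (It J t x - complex_of_real ?G)"
    using f by (rule has_bochner_integral_integral_eq)
  ultimately have "norm (complex_of_real ((2 * pi) ^ CARD('n)) * (It J t x - complex_of_real ?G))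
      \<le> integral\<^sup>L lborel (lclt_integrand t)"
    by (simp only:)
  moreover have "\<bar>(2 * pi) ^ CARD('n)\<bar> = (2 * pi) ^ CARD('n)"
    by simp
  ultimately have "(2 * pi) ^ CARD('n) * norm (It J t x - complex_of_real ?G) \<le> integral\<^sup>L lborel (lclt_integrand t)"
    by (simp only: norm_mult norm_of_real)
  then show ?thesis
    unfolding lclt_error_def by (simp add: pos_le_divide_eq mult.commute)
qed

lemma lclt_error_rescaled:
  assumes "t > 0"
  shows "lclt_error t = t powr (- real CARD('n) / 2)
    * integral\<^sup>L lborel (\<lambda>k. lclt_integrand t ((1 / sqrt t) *\<^sub>R k)) / (2 * pi) ^ CARD('n)"
  using lborel_integral_scaleR[of "1 / sqrt t" "lclt_integrand t"] abs_inverse_sqrt_power[OF assms]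
    assms by (simp add: lclt_error_def)

lemma tendsto_lclt_integrand_rescaled:
  "((\<lambda>t. lclt_integrand t ((1 / sqrt t) *\<^sub>R k)) \<longlongrightarrow> 0) at_top"
proof -
  have "\<forall>\<^sub>F t in at_top. lclt_integrand t ((1 / sqrt t) *\<^sub>R k)
      = \<bar>exp (- (t * (1 - charfun ((1 / sqrt t) *\<^sub>R k)))) - exp (- (gaussian_coeff * (norm k)\<^sup>2))\<bar>"
    using eventually_inverse_sqrt_scaleR_in_brillouin_zone[of k] eventually_gt_at_top[of 0]
    by eventually_elim (simp only: lclt_integrand_def norm_inverse_sqrt_scaleR_power2 indicator_simps
        mult_1_left mult_minus_left)
  moreover have "((\<lambda>t. \<bar>exp (- (t * (1 - charfun ((1 / sqrt t) *\<^sub>R k)))) - exp (- (gaussian_coeff * (norm k)\<^sup>2))\<bar>)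
      \<longlongrightarrow> \<bar>exp (- (gaussian_coeff * (norm k)\<^sup>2)) - exp (- (gaussian_coeff * (norm k)\<^sup>2))\<bar>) at_top"
  proof (intro tendsto_rabs tendsto_diff tendsto_exp tendsto_minus tendsto_const)
    show "((\<lambda>t. t * (1 - charfun ((1 / sqrt t) *\<^sub>R k))) \<longlongrightarrow> gaussian_coeff * (norm k)\<^sup>2) at_top"
      using tendsto_scaled_one_minus_charfun[of k] by (simp add: gaussian_coeff_def)
  qed
  ultimately show ?thesis
    by (simp add: tendsto_cong)
qed

lemma lclt_integrand_rescaled_le:
  assumes "t > 0"
  shows "lclt_integrand t ((1 / sqrt t) *\<^sub>R k)
    \<le> exp (- infrared_coeff * (norm k)\<^sup>2) + exp (- gaussian_coeff * (norm k)\<^sup>2)"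
proof -
  define u where "u = (1 / sqrt t) *\<^sub>R k"
  have "indicator brillouin_zone u * exp (- t * (1 - charfun u)) \<le> exp (- infrared_coeff * (norm k)\<^sup>2)"
  proof (cases "u \<in> brillouin_zone")
    case True
    have "t * (infrared_coeff * (norm u)\<^sup>2) \<le> t * (1 - charfun u)"
      using infrared_coeff_le_one_minus_charfun[OF True] assms by (intro mult_left_mono) auto
    then have "infrared_coeff * (norm k)\<^sup>2 \<le> t * (1 - charfun u)"
      by (simp only: u_def mult.assoc[symmetric] norm_inverse_sqrt_scaleR_power2[OF assms])
    then show ?thesis
      using True by simp
  qed simp
  moreover have "0 \<le> indicator brillouin_zone u * exp (- t * (1 - charfun u))"
    by (simp add: indicator_def)
  moreover have "- (t * gaussian_coeff) * (norm u)\<^sup>2 = - gaussian_coeff * (norm k)\<^sup>2"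
    by (simp only: u_def mult_minus_left norm_inverse_sqrt_scaleR_power2[OF assms])
  moreover have "0 < exp (- gaussian_coeff * (norm k)\<^sup>2)"
    by simp
  ultimately show ?thesis
    unfolding lclt_integrand_def u_def[symmetric] by (simp only: abs_le_iff) linarith
qed

lemma lclt_error_smallo: "lclt_error \<in> o(\<lambda>t. t powr (- real CARD('n) / 2))"
proof (rule smalloI_tendsto)
  define s where "s t = (\<lambda>k. lclt_integrand t ((1 / sqrt t) *\<^sub>R k))" for t
  have [measurable]: "s t \<in> borel_measurable borel" for t
    unfolding s_def by measurable
  have "((\<lambda>t. integral\<^sup>L lborel (s t)) \<longlongrightarrow> integral\<^sup>L lborel (\<lambda>_::real^'n. 0::real)) at_top"
  proof (rule integral_dominated_convergence_at_top
      [where w="\<lambda>k::real^'n. exp (- infrared_coeff * (norm k)\<^sup>2) + exp (- gaussian_coeff * (norm k)\<^sup>2)"])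
    show "integrable lborel (\<lambda>k::real^'n. exp (- infrared_coeff * (norm k)\<^sup>2) + exp (- gaussian_coeff * (norm k)\<^sup>2))"
      using infrared_coeff_pos gaussian_coeff_pos
      by (intro Bochner_Integration.integrable_add integrable_gaussian)
    show "\<forall>\<^sub>F t in at_top. AE k in lborel. norm (s t k)
        \<le> exp (- infrared_coeff * (norm k)\<^sup>2) + exp (- gaussian_coeff * (norm k)\<^sup>2)"
      using eventually_gt_at_top[of 0]
    proof eventually_elim
      case (elim t)
      show ?case
        using lclt_integrand_rescaled_le[OF elim] by (intro AE_I2) (simp add: s_def lclt_integrand_nonneg)
    qed
  qed (auto simp: s_def intro: tendsto_lclt_integrand_rescaled)
  then have "((\<lambda>t. integral\<^sup>L lborel (s t) / (2 * pi) ^ CARD('n)) \<longlongrightarrow> 0) at_top"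
    by (auto intro: tendsto_divide_zero)
  moreover have "\<forall>\<^sub>F t in at_top. lclt_error t / t powr (- real CARD('n) / 2)
      = integral\<^sup>L lborel (s t) / (2 * pi) ^ CARD('n)"
    using eventually_gt_at_top[of 0] by eventually_elim (simp add: lclt_error_rescaled s_def)
  ultimately show "((\<lambda>t. lclt_error t / t powr (- real CARD('n) / 2)) \<longlongrightarrow> 0) at_top"
    by (simp add: tendsto_cong)
  show "\<forall>\<^sub>F t in at_top. t powr (- real CARD('n) / 2) \<noteq> 0"
    using eventually_gt_at_top[of 0] by eventually_elim simp
qed

end

theorem lemma2p2:
  fixes J :: "int^'n \<Rightarrow> real" and K0 K1 K2 \<epsilon> :: real
  assumes sym: "Zd_symmetric J"
    and sum1: "(J has_sum 1) UNIV"
    and K0pos: "K0 > 0" and K1pos: "K1 > 0" and K2pos: "K2 > 0"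
    and infra: "\<And>k::real^'n. (\<forall>i. - pi \<le> k$i \<and> k$i \<le> pi) \<Longrightarrow>
        Re (Jhat J 0 - Jhat J k) \<ge> K0 * (norm k)^2 / (2 * real CARD('n))"
    and K1def: "((\<lambda>x. lnorm2 x * J x) has_sum K1) UNIV"
    and K2sum: "(\<lambda>x. lnorm2 x * \<bar>J x\<bar>) summable_on UNIV"
    and K2bd: "(\<Sum>\<^sub>\<infinity>x. lnorm2 x * \<bar>J x\<bar>) \<le> K2"
    and eps: "\<epsilon> > 0"
  shows "\<exists>g :: real \<Rightarrow> real. g \<in> o(\<lambda>t. t powr (- real CARD('n) / 2)) \<and>
    (\<forall>t x. t \<ge> 1 / \<epsilon> \<longrightarrow>
       norm (It J t x - complex_of_real
               ((real CARD('n) / (2 * pi * K1 * t)) powr (real CARD('n) / 2)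
                * exp (- real CARD('n) * lnorm2 x / (2 * t * K1))))
       \<le> g t + 2 * (real CARD('n) / (pi * K0)) powr (real CARD('n) / 2)
              * exp (- (K0 / (4 * real CARD('n))) / \<epsilon>) * t powr (- real CARD('n) / 2))"
proof -
  interpret infrared_step_distribution J K1 K0
    using sym sum1 K1def K2sum K0pos K1pos infra by unfold_locales
  show ?thesis
  proof (intro exI[of _ lclt_error] conjI allI impI lclt_error_smallo order_trans[OF norm_It_minus_gaussian_le])
    fix t :: real
    assume "1 / \<epsilon> \<le> t"
    with eps show "t > 0"
      by (meson divide_pos_pos zero_less_one less_le_trans)
  qed simp
qed

end
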